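(* Let $\pi_\theta$ be a policy with parameters $\theta$, acting for horizon $H$, producing states $s_t$, actions $a_t$ and rewards $r_t$ for $t=1,\dots,H$. Let $\gamma\in(0,1)$ be a discount factor and, for $1\le k\le H$, define the truncated (shortened-rollout) policy gradient estimator $$g_k = \sum_{t=k}^H \nabla_\theta \log \pi_\theta(a_t \mid s_t)\cdot G_t, \qquad G_t = \sum_{t'=t}^H \gamma^{t'-t} r_{t'}.$$ Assume $|r_t| \le R_{\max}$ for all $t$ and $\|\nabla_\theta \log \pi_\theta(a_t \mid s_t)\| \le G_{\max}$ for all $t$. Then, with $C = G_{\max}^2 R_{\max}^2$, $$\mathrm{Var}[g_k] \le \frac{C}{(1-\gamma)^2}\left( (H-k+1) - \frac{\gamma\,(1-\gamma^{H-k+1})}{1-\gamma} \right)^2,$$ and this upper bound decreases monotonically as $k$ increases.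
   Context: $g_k$ corresponds to starting rollouts after a verified prefix of $k-1$ steps, so that the remaining horizon is $H-k+1$. For the vector-valued random variable $g_k$, $\mathrm{Var}[g_k]$ denotes $\mathbb{E}\|g_k-\mathbb{E}g_k\|^2$, and $\|\cdot\|$ is the Euclidean norm. *)

theory Defs
  imports "HOL-Probability.Probability"
begin

definition disc_return :: "real \<Rightarrow> nat \<Rightarrow> (nat \<Rightarrow> real) \<Rightarrow> nat \<Rightarrow> real" where
  "disc_return \<gamma> H r t = (\<Sum>t'=t..H. \<gamma> ^ (t' - t) * r t')"

definition trunc_pg :: "real \<Rightarrow> nat \<Rightarrow> (nat \<Rightarrow> 'v::real_vector) \<Rightarrow> (nat \<Rightarrow> real) \<Rightarrow> nat \<Rightarrow> 'v" where
  "trunc_pg \<gamma> H score r k = (\<Sum>t=k..H. disc_return \<gamma> H r t *\<^sub>R score t)"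

definition vec_variance :: "'w measure \<Rightarrow> ('w \<Rightarrow> 'v::{banach, second_countable_topology}) \<Rightarrow> real" where
  "vec_variance M X = (\<integral>\<omega>. (norm (X \<omega> - (\<integral>\<omega>'. X \<omega>' \<partial>M)))\<^sup>2 \<partial>M)"

definition var_bound :: "real \<Rightarrow> real \<Rightarrow> nat \<Rightarrow> nat \<Rightarrow> real" where
  "var_bound C \<gamma> H k = C / (1 - \<gamma>)\<^sup>2 *
     (real (H - k + 1) - \<gamma> * (1 - \<gamma> ^ (H - k + 1)) / (1 - \<gamma>))\<^sup>2"

end

theory Submission
  imports Defs
begin

text \<open>The variance is at most the second moment, hence at most the square of any pointwise
  bound on the norm of \<open>g\<^sub>k\<close>. By the triangle inequality this norm is at most \<open>Gmax * Rmax\<close>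
  times the sum over \<open>t \<in> {k..H}\<close> of the returns-to-go of the all-ones reward sequence, a double
  geometric sum whose closed form makes \<open>C\<close> times its square exactly \<open>var_bound\<close>. As a sum of
  nonnegative terms over \<open>{k..H}\<close> it decreases in \<open>k\<close>.\<close>

lemma (in prob_space) vec_variance_eq:
  fixes X :: "'a \<Rightarrow> 'v::{real_inner, banach, second_countable_topology}"
  assumes X: "integrable M X" and X_sq: "integrable M (\<lambda>x. (norm (X x))\<^sup>2)"
  shows "vec_variance M X = expectation (\<lambda>x. (norm (X x))\<^sup>2) - (norm (expectation X))\<^sup>2"
proof -
  define \<mu> where "\<mu> = expectation X"
  have "\<And>x. (norm (X x - \<mu>))\<^sup>2 = (norm (X x))\<^sup>2 - 2 * (X x \<bullet> \<mu>) + (norm \<mu>)\<^sup>2"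
    by (simp add: power2_norm_eq_inner inner_simps inner_commute)
  then have "vec_variance M X = (\<integral>x. (norm (X x))\<^sup>2 - 2 * (X x \<bullet> \<mu>) + (norm \<mu>)\<^sup>2 \<partial>M)"
    by (simp add: vec_variance_def \<mu>_def)
  also have "\<dots> = expectation (\<lambda>x. (norm (X x))\<^sup>2) - 2 * (\<integral>x. X x \<bullet> \<mu> \<partial>M) + (norm \<mu>)\<^sup>2"
    using X X_sq by (simp add: prob_space)
  also have "(\<integral>x. X x \<bullet> \<mu> \<partial>M) = (norm \<mu>)\<^sup>2"
    using X by (simp add: \<mu>_def power2_norm_eq_inner)
  finally show ?thesis
    by (simp add: \<mu>_def)
qed

lemma (in prob_space) vec_variance_le_sq_bound:
  fixes X :: "'a \<Rightarrow> 'v::{real_inner, banach, second_countable_topology}"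
  assumes X: "X \<in> borel_measurable M" and bound: "\<And>x. x \<in> space M \<Longrightarrow> norm (X x) \<le> B"
  shows "vec_variance M X \<le> B\<^sup>2"
proof -
  have sq_bound: "\<And>x. x \<in> space M \<Longrightarrow> (norm (X x))\<^sup>2 \<le> B\<^sup>2"
    using bound by (auto intro!: power_mono)
  have X_int: "integrable M X"
    using X bound by (intro integrable_const_bound[where B = B]) auto
  have X_sq_int: "integrable M (\<lambda>x. (norm (X x))\<^sup>2)"
    using X sq_bound by (intro integrable_const_bound[where B = "B\<^sup>2"]) auto
  have "vec_variance M X \<le> expectation (\<lambda>x. (norm (X x))\<^sup>2)"
    using vec_variance_eq[OF X_int X_sq_int] by simp
  also have "\<dots> \<le> expectation (\<lambda>_. B\<^sup>2)"
    using X_sq_int sq_bound by (intro integral_mono) auto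
  finally show ?thesis
    by (simp add: prob_space)
qed

lemma disc_return_one:
  assumes "t \<le> H"
  shows "disc_return \<gamma> H (\<lambda>_. 1) t = (\<Sum>i\<le>H - t. \<gamma> ^ i)"
  unfolding disc_return_def using assms
  by (intro sum.reindex_bij_witness[where i = "\<lambda>i. i + t" and j = "\<lambda>t'. t' - t"]) auto

lemma abs_disc_return_le:
  assumes "0 \<le> \<gamma>" and "\<And>t'. t' \<in> {t..H} \<Longrightarrow> \<bar>r t'\<bar> \<le> R"
  shows "\<bar>disc_return \<gamma> H r t\<bar> \<le> R * disc_return \<gamma> H (\<lambda>_. 1) t"
proof -
  have "\<bar>disc_return \<gamma> H r t\<bar> \<le> (\<Sum>t'=t..H. \<bar>\<gamma> ^ (t' - t) * r t'\<bar>)"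
    unfolding disc_return_def by (rule sum_abs)
  also have "\<dots> \<le> (\<Sum>t'=t..H. R * \<gamma> ^ (t' - t))"
    using assms by (intro sum_mono) (auto simp: abs_mult mult.commute intro!: mult_right_mono)
  finally show ?thesis
    by (simp add: disc_return_def sum_distrib_left)
qed

lemma norm_trunc_pg_le:
  assumes "0 \<le> \<gamma>"
    and score: "\<And>t. t \<in> {k..H} \<Longrightarrow> norm (score t) \<le> G"
    and r: "\<And>t. t \<in> {k..H} \<Longrightarrow> \<bar>r t\<bar> \<le> R"
  shows "norm (trunc_pg \<gamma> H score r k) \<le> G * R * (\<Sum>t=k..H. disc_return \<gamma> H (\<lambda>_. 1) t)"
proof -
  have "norm (trunc_pg \<gamma> H score r k) \<le> (\<Sum>t=k..H. \<bar>disc_return \<gamma> H r t\<bar> * norm (score t))"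
    unfolding trunc_pg_def by (rule order_trans[OF norm_sum]) simp
  also have "\<dots> \<le> (\<Sum>t=k..H. R * disc_return \<gamma> H (\<lambda>_. 1) t * G)"
  proof (rule sum_mono)
    fix t assume t: "t \<in> {k..H}"
    have "0 \<le> R"
      using r[OF t] by linarith
    then show "\<bar>disc_return \<gamma> H r t\<bar> * norm (score t) \<le> R * disc_return \<gamma> H (\<lambda>_. 1) t * G"
      using t assms abs_disc_return_le[of \<gamma> t H r R]
      by (intro mult_mono) (auto simp: disc_return_def intro!: sum_nonneg)
  qed
  finally show ?thesis
    by (simp add: sum_distrib_left sum_distrib_right mult_ac)
qed

lemma sum_partial_geometric_sums:
  fixes \<gamma> :: real
  assumes "\<gamma> \<noteq> 1"
  shows "(\<Sum>j<n. \<Sum>i\<le>j. \<gamma> ^ i) = (real n - \<gamma> * (1 - \<gamma> ^ n) / (1 - \<gamma>)) / (1 - \<gamma>)"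
proof (induction n)
  case (Suc n)
  have "1 - \<gamma> \<noteq> 0"
    using assms by simp
  have "(\<Sum>j<Suc n. \<Sum>i\<le>j. \<gamma> ^ i) = (\<Sum>j<n. \<Sum>i\<le>j. \<gamma> ^ i) + (1 - \<gamma> ^ Suc n) / (1 - \<gamma>)"
    using assms by (simp add: sum_gp0)
  also have "\<dots> = (real n - \<gamma> * (1 - \<gamma> ^ n) / (1 - \<gamma>)) / (1 - \<gamma>) + (1 - \<gamma> ^ Suc n) / (1 - \<gamma>)"
    by (simp only: Suc.IH)
  also have "\<dots> = (real (Suc n) - \<gamma> * (1 - \<gamma> ^ Suc n) / (1 - \<gamma>)) / (1 - \<gamma>)"
    using \<open>1 - \<gamma> \<noteq> 0\<close> by (simp add: divide_simps) (simp add: algebra_simps)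
  finally show ?case .
qed (use assms in simp)

lemma sum_disc_return_one:
  fixes \<gamma> :: real
  assumes "\<gamma> \<noteq> 1" and "k \<le> H"
  shows "(\<Sum>t=k..H. disc_return \<gamma> H (\<lambda>_. 1) t)
           = (real (H - k + 1) - \<gamma> * (1 - \<gamma> ^ (H - k + 1)) / (1 - \<gamma>)) / (1 - \<gamma>)"
proof -
  have "(\<Sum>t=k..H. disc_return \<gamma> H (\<lambda>_. 1) t) = (\<Sum>j<H - k + 1. \<Sum>i\<le>j. \<gamma> ^ i)"
    using assms(2) by (intro sum.reindex_bij_witness[where i = "\<lambda>j. H - j" and j = "\<lambda>t. H - t"])
      (auto simp: disc_return_one)
  then show ?thesis
    using sum_partial_geometric_sums[OF assms(1)] by simp
qed

lemma var_bound_eq: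
  assumes "\<gamma> \<noteq> 1" and "k \<le> H"
  shows "var_bound C \<gamma> H k = C * (\<Sum>t=k..H. disc_return \<gamma> H (\<lambda>_. 1) t)\<^sup>2"
  using assms by (simp add: var_bound_def sum_disc_return_one power_divide)

lemma var_bound_antimono:
  assumes "0 \<le> \<gamma>" "\<gamma> \<noteq> 1" "0 \<le> C" and "k1 \<le> k2" "k2 \<le> H"
  shows "var_bound C \<gamma> H k2 \<le> var_bound C \<gamma> H k1"
proof -
  have disc_return_nonneg: "0 \<le> disc_return \<gamma> H (\<lambda>_. 1) t" for t
    using assms(1) by (auto simp: disc_return_def intro!: sum_nonneg)
  have "(\<Sum>t=k2..H. disc_return \<gamma> H (\<lambda>_. 1) t) \<le> (\<Sum>t=k1..H. disc_return \<gamma> H (\<lambda>_. 1) t)"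
    using assms(4) by (intro sum_mono2 disc_return_nonneg) auto
  then show ?thesis
    using assms by (simp add: var_bound_eq mult_left_mono power_mono sum_nonneg disc_return_nonneg)
qed

lemma borel_measurable_trunc_pg:
  fixes score :: "nat \<Rightarrow> 'w \<Rightarrow> 'v::{banach, second_countable_topology}"
  assumes "\<And>t. t \<in> {k..H} \<Longrightarrow> r t \<in> borel_measurable M"
    and "\<And>t. t \<in> {k..H} \<Longrightarrow> score t \<in> borel_measurable M"
  shows "(\<lambda>x. trunc_pg \<gamma> H (\<lambda>t. score t x) (\<lambda>t. r t x) k) \<in> borel_measurable M"
  unfolding trunc_pg_def disc_return_def using assms by measurable

theorem theorem3:
  fixes M :: "'w measure"
    and \<pi> :: "'p::euclidean_space \<Rightarrow> 's \<Rightarrow> 'a \<Rightarrow> real"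
    and \<theta> :: "'p"
    and s :: "nat \<Rightarrow> 'w \<Rightarrow> 's" and a :: "nat \<Rightarrow> 'w \<Rightarrow> 'a"
    and r :: "nat \<Rightarrow> 'w \<Rightarrow> real"
    and score :: "nat \<Rightarrow> 'w \<Rightarrow> 'p"
    and \<gamma> Rmax Gmax :: real and H k :: nat
  assumes "prob_space M"
    and "0 < \<gamma>" and "\<gamma> < 1"
    and "1 \<le> k" and "k \<le> H"
    and score_def: "\<And>t \<omega>. t \<in> {1..H} \<Longrightarrow> \<omega> \<in> space M \<Longrightarrow>
           GDERIV (\<lambda>\<theta>'. ln (\<pi> \<theta>' (s t \<omega>) (a t \<omega>))) \<theta> :> score t \<omega>"
    and "\<And>t. t \<in> {1..H} \<Longrightarrow> r t \<in> borel_measurable M"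
    and "\<And>t. t \<in> {1..H} \<Longrightarrow> score t \<in> borel_measurable M"
    and "\<And>t \<omega>. t \<in> {1..H} \<Longrightarrow> \<omega> \<in> space M \<Longrightarrow> \<bar>r t \<omega>\<bar> \<le> Rmax"
    and "\<And>t \<omega>. t \<in> {1..H} \<Longrightarrow> \<omega> \<in> space M \<Longrightarrow> norm (score t \<omega>) \<le> Gmax"
  shows "vec_variance M (\<lambda>\<omega>. trunc_pg \<gamma> H (\<lambda>t. score t \<omega>) (\<lambda>t. r t \<omega>) k)
           \<le> var_bound (Gmax\<^sup>2 * Rmax\<^sup>2) \<gamma> H k
         \<and> (\<forall>k1 k2. 1 \<le> k1 \<longrightarrow> k1 \<le> k2 \<longrightarrow> k2 \<le> H \<longrightarrow>
              var_bound (Gmax\<^sup>2 * Rmax\<^sup>2) \<gamma> H k2 \<le> var_bound (Gmax\<^sup>2 * Rmax\<^sup>2) \<gamma> H k1)"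
proof
  interpret prob_space M by fact
  have "{k..H} \<subseteq> {1..H}"
    using \<open>1 \<le> k\<close> by auto
  then have "vec_variance M (\<lambda>\<omega>. trunc_pg \<gamma> H (\<lambda>t. score t \<omega>) (\<lambda>t. r t \<omega>) k)
      \<le> (Gmax * Rmax * (\<Sum>t=k..H. disc_return \<gamma> H (\<lambda>_. 1) t))\<^sup>2"
    using assms
    by (intro vec_variance_le_sq_bound borel_measurable_trunc_pg norm_trunc_pg_le) auto
  then show "vec_variance M (\<lambda>\<omega>. trunc_pg \<gamma> H (\<lambda>t. score t \<omega>) (\<lambda>t. r t \<omega>) k)
      \<le> var_bound (Gmax\<^sup>2 * Rmax\<^sup>2) \<gamma> H k"
    using assms by (simp add: var_bound_eq power_mult_distrib)
next
  show "\<forall>k1 k2. 1 \<le> k1 \<longrightarrow> k1 \<le> k2 \<longrightarrow> k2 \<le> H \<longrightarrow>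
      var_bound (Gmax\<^sup>2 * Rmax\<^sup>2) \<gamma> H k2 \<le> var_bound (Gmax\<^sup>2 * Rmax\<^sup>2) \<gamma> H k1"
    using assms by (auto intro!: var_bound_antimono)
qed

end
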